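(* Let $\mathcal{D}\subseteq[0,1]$ be a two-outcome forecast domain (a non-degenerate interval, identified with the probability of the first outcome). A pooling operator $\oplus$ on $\mathcal{D}$ (a binary operator on weighted forecasts) satisfies the following six axioms if and only if there is a continuous, strictly increasing function $g:\mathcal{D}\to\mathbb{R}$ such that $\oplus=\oplus_g$ (i.e., for all weighted forecasts $\Pi_1,\dots,\Pi_m$, $\Pi_1\oplus\cdots\oplus\Pi_m=\bigoplus_{g,i=1}^m\Pi_i$): (1) Weight additivity: $\mathrm{wt}(\Pi_1\oplus\Pi_2)=\mathrm{wt}(\Pi_1)+\mathrm{wt}(\Pi_2)$ for all $\Pi_1,\Pi_2$. (2) Commutativity: $\Pi_1\oplus\Pi_2=\Pi_2\oplus\Pi_1$ for all $\Pi_1,\Pi_2$. (3) Associativity: $\Pi_1\oplus(\Pi_2\oplus\Pi_3)=(\Pi_1\oplus\Pi_2)\oplus\Pi_3$ for all $\Pi_1,\Pi_2,\Pi_3$. (4) Continuity: for all $p_1,p_2\in\mathcal{D}$, $\mathrm{pr}((p_1,w_1)\oplus(p_2,w_2))$ is a continuous function of $(w_1,w_2)$ on $\mathbb{R}_{\ge0}^2\setminus\{(0,0)\}$, with the convention $(p,w)\oplus(q,0)=(q,0)\oplus(p,w)=(p,w)$. (5) Idempotence: if $\mathrm{pr}(\Pi_1)=\mathrm{pr}(\Pi_2)$ then $\mathrm{pr}(\Pi_1\oplus\Pi_2)=\mathrm{pr}(\Pi_1)$. (6) Monotonicity: for every $w>0$ and $p_1>p_2$ in $\mathcal{D}$, the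 quantity $\mathrm{pr}((p_1,x)\oplus(p_2,w-x))$ is a strictly increasing function of $x\in(0,w)$.
   Context: A weighted forecast is a pair $\Pi=(p,w)\in\mathcal{D}\times\mathbb{R}_{>0}$, with $\mathrm{pr}(\Pi):=p$ and $\mathrm{wt}(\Pi):=w$. A pooling operator is a binary operator on weighted forecasts; when associative, $\Pi_1\oplus\cdots\oplus\Pi_m$ is well defined without parentheses. For a continuous strictly increasing $g:\mathcal{D}\to\mathbb{R}$, the quasi-arithmetic pool with respect to $g$ is \[\bigoplus_{g,\,i=1}^m (p_i,w_i):=\Big(g^{-1}\Big(\tfrac{\sum_i w_i g(p_i)}{\sum_i w_i}\Big),\ \sum_i w_i\Big).\] *)

theory Defs
  imports "HOL-Analysis.Analysis"
begin

text \<open>A weighted forecast on a two-outcome domain D is a pair (p, w) with p in D and w > 0.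
  pr = fst, wt = snd.\<close>

type_synonym wforecast = "real \<times> real"

definition is_wf :: "real set \<Rightarrow> wforecast \<Rightarrow> bool" where
  "is_wf D F \<longleftrightarrow> fst F \<in> D \<and> snd F > 0"

definition pooling_operator :: "real set \<Rightarrow> (wforecast \<Rightarrow> wforecast \<Rightarrow> wforecast) \<Rightarrow> bool" where
  "pooling_operator D op \<longleftrightarrow> (\<forall>F1 F2. is_wf D F1 \<longrightarrow> is_wf D F2 \<longrightarrow> is_wf D (op F1 F2))"

definition pool_list :: "(wforecast \<Rightarrow> wforecast \<Rightarrow> wforecast) \<Rightarrow> wforecast list \<Rightarrow> wforecast" where
  "pool_list op xs = foldl op (hd xs) (tl xs)"

definition qa_pool :: "real set \<Rightarrow> (real \<Rightarrow> real) \<Rightarrow> wforecast list \<Rightarrow> wforecast" where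
  "qa_pool D g xs =
     (inv_into D g ((\<Sum>F\<leftarrow>xs. snd F * g (fst F)) / (\<Sum>F\<leftarrow>xs. snd F)),
      (\<Sum>F\<leftarrow>xs. snd F))"

text \<open>pr((p1,w1) \<oplus> (p2,w2)) extended to zero weights by the convention
  (p,w) \<oplus> (q,0) = (q,0) \<oplus> (p,w) = (p,w).\<close>
definition ext_pr :: "(wforecast \<Rightarrow> wforecast \<Rightarrow> wforecast) \<Rightarrow> real \<Rightarrow> real \<Rightarrow> real \<times> real \<Rightarrow> real" where
  "ext_pr op p1 p2 ww =
     (if snd ww = 0 then p1 else if fst ww = 0 then p2 else fst (op (p1, fst ww) (p2, snd ww)))"

definition six_axioms :: "real set \<Rightarrow> (wforecast \<Rightarrow> wforecast \<Rightarrow> wforecast) \<Rightarrow> bool" where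
  "six_axioms D op \<longleftrightarrow>
     \<comment> \<open>(1) weight additivity\<close>
     (\<forall>F1 F2. is_wf D F1 \<longrightarrow> is_wf D F2 \<longrightarrow> snd (op F1 F2) = snd F1 + snd F2) \<and>
     \<comment> \<open>(2) commutativity\<close>
     (\<forall>F1 F2. is_wf D F1 \<longrightarrow> is_wf D F2 \<longrightarrow> op F1 F2 = op F2 F1) \<and>
     \<comment> \<open>(3) associativity\<close>
     (\<forall>F1 F2 F3. is_wf D F1 \<longrightarrow> is_wf D F2 \<longrightarrow> is_wf D F3 \<longrightarrow>
        op F1 (op F2 F3) = op (op F1 F2) F3) \<and>
     \<comment> \<open>(4) continuity\<close>
     (\<forall>p1\<in>D. \<forall>p2\<in>D. continuous_on {ww :: real \<times> real. fst ww \<ge> 0 \<and> snd ww \<ge> 0 \<and> ww \<noteq> (0, 0)}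
        (ext_pr op p1 p2)) \<and>
     \<comment> \<open>(5) idempotence\<close>
     (\<forall>F1 F2. is_wf D F1 \<longrightarrow> is_wf D F2 \<longrightarrow> fst F1 = fst F2 \<longrightarrow> fst (op F1 F2) = fst F1) \<and>
     \<comment> \<open>(6) monotonicity\<close>
     (\<forall>w > 0. \<forall>p1\<in>D. \<forall>p2\<in>D. p1 > p2 \<longrightarrow>
        strict_mono_on {0<..<w} (\<lambda>x. fst (op (p1, x) (p2, w - x))))"

end

theory Submission
  imports Defs
begin

text \<open>
  Fix forecasts c < d in D. The algebraic axioms (1), (2), (3), (5) make the pool
  (d, a) \<oplus> (c, b) additive in the weight vector (a, b); idempotence then makes its forecast
  invariant under rational rescaling of (a, b), and continuity extends this to all positive
  factors. Hence the forecast depends only on t = a / (a + b), and by monotonicity and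
  continuity t \<mapsto> pr((d, t) \<oplus> (c, 1 - t)) is an increasing bijection from [0, 1] onto
  [c, d]. Its inverse turns \<oplus> into weighted averaging on [c, d], and every other such
  generator on [c, d] is an affine function of it. Normalising the generators to 0 at a and
  to 1 at b, for fixed a < b in D, makes those on nested intervals agree, so they glue to a
  generator on all of D.
  Conversely, a quasi-arithmetic pool satisfies the axioms directly; associativity is the
  invariance of the quasi-arithmetic mean under permutations.
\<close>

lemma strict_mono_on_Icc_if_Ioo:
  fixes f :: "real \<Rightarrow> real"
  assumes cont: "continuous_on {a..b} f" and mono: "strict_mono_on {a<..<b} f"
  shows "strict_mono_on {a..b} f"
proof (rule strict_mono_onI)
  fix x y assume xy: "x \<in> {a..b}" "y \<in> {a..b}" "x < y"
  define m1 where "m1 = (2 * x + y) / 3"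
  define m2 where "m2 = (x + 2 * y) / 3"
  have m: "x < m1" "m1 < m2" "m2 < y" using xy(3) by (simp_all add: m1_def m2_def)
  have cl: "continuous_on (closure {l<..<r}) f" if "a \<le> l" "l < r" "r \<le> b" for l r
    using that by (auto intro: continuous_on_subset[OF cont])
  have "f x \<le> f m1"
  proof (rule continuous_le_on_closure[OF cl])
    show "f z \<le> f m1" if "z \<in> {x<..<m1}" for z
      using that m xy by (intro less_imp_le strict_mono_onD[OF mono]) auto
  qed (use m xy in auto)
  also have "f m1 < f m2" using m xy by (intro strict_mono_onD[OF mono]) auto
  also have "f m2 \<le> f y"
  proof (rule continuous_ge_on_closure[OF cl])
    show "f m2 \<le> f z" if "z \<in> {m2<..<y}" for z
      using that m xy by (intro less_imp_le strict_mono_onD[OF mono]) auto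
  qed (use m xy in auto)
  finally show "f x < f y" .
qed

lemma continuous_on_const_on_Rats:
  fixes f :: "real \<Rightarrow> 'a::t1_space"
  assumes "open S" "continuous_on S f" "\<And>r. r \<in> \<rat> \<Longrightarrow> r \<in> S \<Longrightarrow> f r = y" "x \<in> S"
  shows "f x = y"
proof -
  obtain e where e: "e > 0" "cball x e \<subseteq> S"
    using assms(1,4) open_contains_cball by blast
  have "x \<in> ball x e \<inter> closure \<rat>" using e by (simp add: Rats_closure_real)
  also have "\<dots> \<subseteq> closure (ball x e \<inter> \<rat>)" by (rule open_Int_closure_subset) simp
  finally have x: "x \<in> closure (ball x e \<inter> \<rat>)" .
  have "closure (ball x e \<inter> \<rat>) \<subseteq> closure (ball x e)" by (rule closure_mono) blast
  with e have sub: "closure (ball x e \<inter> \<rat>) \<subseteq> S" by simp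
  show ?thesis
  proof (rule continuous_constant_on_closure[OF continuous_on_subset[OF assms(2) sub] _ x])
    show "f z = y" if "z \<in> ball x e \<inter> \<rat>" for z
      using that e ball_subset_cball by (intro assms(3)) blast+
  qed
qed

lemma strict_mono_image_Icc:
  fixes f :: "real \<Rightarrow> real"
  assumes "a \<le> b" "continuous_on {a..b} f" "strict_mono_on {a..b} f"
  shows "f ` {a..b} = {f a..f b}"
proof
  show "f ` {a..b} \<subseteq> {f a..f b}"
    using assms(1,3) by (auto intro!: strict_mono_on_leD[OF assms(3)])
  show "{f a..f b} \<subseteq> f ` {a..b}"
    using IVT'[of f a _ b] assms(1,2) by force
qed

lemma weighted_mean_between:
  fixes x y u v :: real
  assumes "u \<ge> 0" "v \<ge> 0" "u + v > 0"
  shows "(u * x + v * y) / (u + v) \<in> {min x y..max x y}"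
proof -
  have "(u + v) * min x y \<le> u * x + v * y" "u * x + v * y \<le> (u + v) * max x y"
    using assms by (simp_all add: distrib_right add_mono mult_left_mono)
  then show ?thesis using assms by (simp add: field_simps)
qed

lemma is_interval_Icc_subset:
  fixes D :: "real set"
  assumes "is_interval D" "a \<in> D" "b \<in> D"
  shows "{a..b} \<subseteq> D"
  using interval_subset_is_interval[OF assms(1), of a b] assms(2,3) by (simp add: cbox_interval)

lemma continuous_on_if_continuous_on_Icc:
  fixes f :: "real \<Rightarrow> 'a::topological_space"
  assumes "\<And>c d. c \<in> D \<Longrightarrow> d \<in> D \<Longrightarrow> continuous_on (D \<inter> {c..d}) f"
  shows "continuous_on D f"
  unfolding continuous_on_eq_continuous_within
proof
  fix x assume x: "x \<in> D"
  obtain c l where c: "c \<in> D" "c \<le> x" "l < x" "D \<inter> {l<..} \<subseteq> {c..}"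
  proof (cases "\<exists>y\<in>D. y < x")
    case True
    then show ?thesis using that by fastforce
  next
    case False
    then show ?thesis using that[of x "x - 1"] x by (auto simp: not_less)
  qed
  obtain d h where d: "d \<in> D" "x \<le> d" "x < h" "D \<inter> {..<h} \<subseteq> {..d}"
  proof (cases "\<exists>y\<in>D. x < y")
    case True
    then show ?thesis using that by fastforce
  next
    case False
    then show ?thesis using that[of x "x + 1"] x by (auto simp: not_less)
  qed
  have "continuous (at x within D \<inter> {c..d}) f"
    using assms[OF c(1) d(1)] x c(2) d(2) by (simp add: continuous_on_eq_continuous_within)
  moreover have "at x within D = at x within D \<inter> {c..d}"
    by (rule at_within_nhd[of _ "{l<..<h}"]) (use c d in auto)
  ultimately show "continuous (at x within D) f" by simp
qed

lemma is_wf_Pair [simp]: "is_wf D (p, w) \<longleftrightarrow> p \<in> D \<and> w > 0"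
  by (simp add: is_wf_def)

definition weight_cone :: "(real \<times> real) set" where
  "weight_cone = {w. 0 \<le> fst w \<and> 0 \<le> snd w \<and> w \<noteq> (0, 0)}"

lemma mem_weight_cone: "(a, b) \<in> weight_cone \<longleftrightarrow> 0 \<le> a \<and> 0 \<le> b \<and> 0 < a + b"
  by (auto simp: weight_cone_def)

lemma weight_cone_sum_pos: "w \<in> weight_cone \<Longrightarrow> fst w + snd w > 0"
  by (cases w) (simp add: mem_weight_cone)

lemma weight_cone_add: "x \<in> weight_cone \<Longrightarrow> y \<in> weight_cone \<Longrightarrow> x + y \<in> weight_cone"
  by (cases x; cases y) (simp add: mem_weight_cone)

lemma weight_cone_scaleR: "r > 0 \<Longrightarrow> x \<in> weight_cone \<Longrightarrow> r *\<^sub>R x \<in> weight_cone"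
  by (cases x) (auto simp: mem_weight_cone distrib_left[symmetric])

locale qa_pooling =
  fixes D :: "real set" and g :: "real \<Rightarrow> real" and op :: "wforecast \<Rightarrow> wforecast \<Rightarrow> wforecast"
  assumes interval: "is_interval D" and continuous_g: "continuous_on D g"
    and strict_mono_g: "strict_mono_on D g" and pooling: "pooling_operator D op"
    and pool_list_qa: "\<And>xs. xs \<noteq> [] \<Longrightarrow> \<forall>F\<in>set xs. is_wf D F \<Longrightarrow> pool_list op xs = qa_pool D g xs"
begin

definition qa_mean :: "real \<Rightarrow> real \<Rightarrow> real \<Rightarrow> real \<Rightarrow> real" where
  "qa_mean p u q v = inv_into D g ((u * g p + v * g q) / (u + v))"

lemma inv_into_g: "p \<in> D \<Longrightarrow> inv_into D g (g p) = p"
  by (rule inv_into_f_f[OF strict_mono_on_imp_inj_on[OF strict_mono_g]])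

lemma Icc_min_max_subset: "p \<in> D \<Longrightarrow> q \<in> D \<Longrightarrow> {min p q..max p q} \<subseteq> D"
  by (intro is_interval_Icc_subset[OF interval]) (simp_all add: min_def max_def)

lemma qa_mean_between:
  assumes pq: "p \<in> D" "q \<in> D" and uv: "u \<ge> 0" "v \<ge> 0" "u + v > 0"
  shows "qa_mean p u q v \<in> {min p q..max p q}"
    and "g (qa_mean p u q v) = (u * g p + v * g q) / (u + v)"
proof -
  have sub: "{min p q..max p q} \<subseteq> D" using Icc_min_max_subset[OF pq] .
  have "g ` {min p q..max p q} = {g (min p q)..g (max p q)}"
    using continuous_on_subset[OF continuous_g sub] monotone_on_subset[OF strict_mono_g sub]
    by (intro strict_mono_image_Icc) auto
  also have "\<dots> = {min (g p) (g q)..max (g p) (g q)}"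
    using strict_mono_on_less_eq[OF strict_mono_g pq] by (simp add: min_def max_def)
  finally have "(u * g p + v * g q) / (u + v) \<in> g ` {min p q..max p q}"
    using weighted_mean_between[OF uv] by simp
  then obtain x where x: "x \<in> {min p q..max p q}" "(u * g p + v * g q) / (u + v) = g x"
    by (elim imageE)
  moreover have "inv_into D g (g x) = x"
    using x sub inv_into_g by blast
  ultimately show "qa_mean p u q v \<in> {min p q..max p q}"
    "g (qa_mean p u q v) = (u * g p + v * g q) / (u + v)"
    by (simp_all add: qa_mean_def)
qed

lemma qa_mean_mem:
  "p \<in> D \<Longrightarrow> q \<in> D \<Longrightarrow> u \<ge> 0 \<Longrightarrow> v \<ge> 0 \<Longrightarrow> u + v > 0 \<Longrightarrow> qa_mean p u q v \<in> D"
  using qa_mean_between(1) Icc_min_max_subset by blast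

lemma qa_mean_same: "p \<in> D \<Longrightarrow> u + v > 0 \<Longrightarrow> qa_mean p u p v = p"
  by (simp add: qa_mean_def inv_into_g distrib_right[symmetric])

lemma op_eq_qa_mean: "p \<in> D \<Longrightarrow> q \<in> D \<Longrightarrow> u > 0 \<Longrightarrow> v > 0 \<Longrightarrow> op (p, u) (q, v) = (qa_mean p u q v, u + v)"
  using pool_list_qa[of "[(p, u), (q, v)]"] by (simp add: pool_list_def qa_pool_def qa_mean_def)

lemma ext_pr_eq_qa_mean:
  assumes "p \<in> D" "q \<in> D" "w \<in> weight_cone"
  shows "ext_pr op p q w = qa_mean p (fst w) q (snd w)"
  using assms
  by (cases w) (auto simp: ext_pr_def mem_weight_cone qa_mean_def op_eq_qa_mean inv_into_g)

lemma snd_op: "is_wf D F1 \<Longrightarrow> is_wf D F2 \<Longrightarrow> snd (op F1 F2) = snd F1 + snd F2"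
  by (cases F1; cases F2) (simp add: op_eq_qa_mean)

lemma op_commute: "is_wf D F1 \<Longrightarrow> is_wf D F2 \<Longrightarrow> op F1 F2 = op F2 F1"
  by (cases F1; cases F2) (simp add: op_eq_qa_mean qa_mean_def add.commute)

lemma op_assoc:
  assumes "is_wf D F1" "is_wf D F2" "is_wf D F3"
  shows "op F1 (op F2 F3) = op (op F1 F2) F3"
proof -
  have "is_wf D (op F2 F3)" using assms pooling unfolding pooling_operator_def by blast
  with assms(1) have "op F1 (op F2 F3) = op (op F2 F3) F1" by (rule op_commute)
  also have "\<dots> = qa_pool D g [F2, F3, F1]"
    using assms pool_list_qa[of "[F2, F3, F1]"] by (simp add: pool_list_def)
  also have "\<dots> = qa_pool D g [F1, F2, F3]"
    by (simp add: qa_pool_def ac_simps)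
  also have "\<dots> = op (op F1 F2) F3"
    using assms pool_list_qa[of "[F1, F2, F3]"] by (simp add: pool_list_def)
  finally show ?thesis .
qed

lemma fst_op_same: "is_wf D F1 \<Longrightarrow> is_wf D F2 \<Longrightarrow> fst F1 = fst F2 \<Longrightarrow> fst (op F1 F2) = fst F1"
  by (cases F1; cases F2) (simp add: op_eq_qa_mean qa_mean_same)

lemma continuous_on_ext_pr:
  assumes pq: "p \<in> D" "q \<in> D"
  shows "continuous_on weight_cone (ext_pr op p q)"
proof -
  let ?K = "{min p q..max p q}" and ?m = "\<lambda>w. (fst w * g p + snd w * g q) / (fst w + snd w)"
  have K: "?K \<subseteq> D" by (rule Icc_min_max_subset[OF pq])
  have "continuous_on (g ` ?K) (inv_into D g)"
    by (rule continuous_on_inv[OF continuous_on_subset[OF continuous_g K] compact_Icc])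
      (use K inv_into_g in blast)
  moreover have "continuous_on weight_cone ?m"
    using weight_cone_sum_pos by (intro continuous_intros) force
  moreover have "?m ` weight_cone \<subseteq> g ` ?K"
  proof (rule image_subsetI)
    fix w assume "w \<in> weight_cone"
    then have "qa_mean p (fst w) q (snd w) \<in> ?K" "g (qa_mean p (fst w) q (snd w)) = ?m w"
      using qa_mean_between[OF pq, of "fst w" "snd w"] by (cases w; simp add: mem_weight_cone)+
    then show "?m w \<in> g ` ?K" by (metis image_eqI)
  qed
  ultimately have "continuous_on weight_cone (\<lambda>w. inv_into D g (?m w))"
    by (rule continuous_on_compose2)
  then show ?thesis
    by (rule continuous_on_eq) (simp add: ext_pr_eq_qa_mean[OF pq] qa_mean_def)
qed

lemma strict_mono_on_fst_op:
  assumes "w > 0" "p \<in> D" "q \<in> D" "q < p"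
  shows "strict_mono_on {0<..<w} (\<lambda>x. fst (op (p, x) (q, w - x)))"
proof (rule strict_mono_onI)
  fix x y assume xy: "x \<in> {0<..<w}" "y \<in> {0<..<w}" "x < y"
  have "g q < g p" using strict_mono_onD[OF strict_mono_g] assms by blast
  with xy have "(y - x) * g q < (y - x) * g p" by simp
  then have "(x * g p + (w - x) * g q) / w < (y * g p + (w - y) * g q) / w"
    using \<open>w > 0\<close> by (intro divide_strict_right_mono) (auto simp: algebra_simps)
  then have "g (qa_mean p x q (w - x)) < g (qa_mean p y q (w - y))"
    using qa_mean_between(2)[OF assms(2,3), of x "w - x"]
      qa_mean_between(2)[OF assms(2,3), of y "w - y"] xy
    by simp
  moreover have "qa_mean p x q (w - x) \<in> D" "qa_mean p y q (w - y) \<in> D"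
    using qa_mean_mem assms(2,3) xy by simp_all
  ultimately show "fst (op (p, x) (q, w - x)) < fst (op (p, y) (q, w - y))"
    using xy assms strict_mono_on_less[OF strict_mono_g] by (simp add: op_eq_qa_mean)
qed

lemma six_axioms_hold: "six_axioms D op"
  unfolding six_axioms_def
  using snd_op op_commute op_assoc continuous_on_ext_pr[unfolded weight_cone_def] fst_op_same
    strict_mono_on_fst_op
  by blast

end

locale pool_axioms =
  fixes D :: "real set" and op :: "wforecast \<Rightarrow> wforecast \<Rightarrow> wforecast"
  assumes pooling: "pooling_operator D op" and axioms: "six_axioms D op"
begin

lemma is_wf_op: "is_wf D F1 \<Longrightarrow> is_wf D F2 \<Longrightarrow> is_wf D (op F1 F2)"
  using pooling unfolding pooling_operator_def by blast

lemma snd_op: "is_wf D F1 \<Longrightarrow> is_wf D F2 \<Longrightarrow> snd (op F1 F2) = snd F1 + snd F2"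
  using axioms unfolding six_axioms_def by blast

lemma op_commute: "is_wf D F1 \<Longrightarrow> is_wf D F2 \<Longrightarrow> op F1 F2 = op F2 F1"
  using axioms unfolding six_axioms_def by blast

lemma op_assoc:
  "is_wf D F1 \<Longrightarrow> is_wf D F2 \<Longrightarrow> is_wf D F3 \<Longrightarrow> op F1 (op F2 F3) = op (op F1 F2) F3"
  using axioms unfolding six_axioms_def by blast

lemma fst_op_same: "is_wf D F1 \<Longrightarrow> is_wf D F2 \<Longrightarrow> fst F1 = fst F2 \<Longrightarrow> fst (op F1 F2) = fst F1"
  using axioms unfolding six_axioms_def by blast

lemma continuous_on_ext_pr: "p \<in> D \<Longrightarrow> q \<in> D \<Longrightarrow> continuous_on weight_cone (ext_pr op p q)"
  using axioms unfolding six_axioms_def weight_cone_def by blast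

lemma strict_mono_on_fst_op:
  "w > 0 \<Longrightarrow> p \<in> D \<Longrightarrow> q \<in> D \<Longrightarrow> q < p \<Longrightarrow>
    strict_mono_on {0<..<w} (\<lambda>x. fst (op (p, x) (q, w - x)))"
  using axioms unfolding six_axioms_def by blast

lemma op_same_point: "p \<in> D \<Longrightarrow> a > 0 \<Longrightarrow> b > 0 \<Longrightarrow> op (p, a) (p, b) = (p, a + b)"
  using fst_op_same[of "(p, a)" "(p, b)"] snd_op[of "(p, a)" "(p, b)"] by (simp add: prod_eq_iff)

definition pool2 :: "real \<Rightarrow> real \<Rightarrow> real \<times> real \<Rightarrow> wforecast" where
  "pool2 p q w =
     (if snd w = 0 then (p, fst w) else if fst w = 0 then (q, snd w) else op (p, fst w) (q, snd w))"

lemma fst_pool2: "fst (pool2 p q w) = ext_pr op p q w"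
  by (simp add: pool2_def ext_pr_def)

lemma is_wf_pool2: "p \<in> D \<Longrightarrow> q \<in> D \<Longrightarrow> w \<in> weight_cone \<Longrightarrow> is_wf D (pool2 p q w)"
  by (cases w) (auto simp: pool2_def mem_weight_cone intro!: is_wf_op)

lemma snd_pool2: "p \<in> D \<Longrightarrow> q \<in> D \<Longrightarrow> w \<in> weight_cone \<Longrightarrow> snd (pool2 p q w) = fst w + snd w"
  by (cases w) (auto simp: pool2_def mem_weight_cone snd_op)

lemma pool2_swap:
  assumes "p \<in> D" "q \<in> D" "(a, b) \<in> weight_cone"
  shows "pool2 p q (a, b) = pool2 q p (b, a)"
  using assms by (auto simp: pool2_def mem_weight_cone op_commute)

lemma op_pool2_left:
  assumes pq: "p \<in> D" "q \<in> D" and w: "(a, b) \<in> weight_cone" and "c > 0"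
  shows "op (pool2 p q (a, b)) (p, c) = pool2 p q (a + c, b)"
proof -
  consider "b = 0" "a > 0" | "a = 0" "b > 0" | "a > 0" "b > 0"
    using w by (fastforce simp: mem_weight_cone)
  then show ?thesis
  proof cases
    case 1
    then show ?thesis using assms by (simp add: pool2_def op_same_point)
  next
    case 2
    then show ?thesis using assms by (simp add: pool2_def op_commute)
  next
    case 3
    with assms have "op (op (p, a) (q, b)) (p, c) = op (op (p, a) (p, c)) (q, b)"
      by (metis is_wf_Pair op_assoc op_commute)
    with 3 assms show ?thesis by (simp add: pool2_def op_same_point)
  qed
qed

lemma op_pool2_right:
  assumes "p \<in> D" "q \<in> D" "(a, b) \<in> weight_cone" "c > 0"
  shows "op (pool2 p q (a, b)) (q, c) = pool2 p q (a, b + c)"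
proof -
  have "(b, a) \<in> weight_cone" "(a, b + c) \<in> weight_cone"
    using assms by (auto simp: mem_weight_cone)
  then show ?thesis
    using assms op_pool2_left[of q p b a c] pool2_swap[of p q] by metis
qed

lemma op_pool2_pool2:
  assumes pq: "p \<in> D" "q \<in> D" and x: "x \<in> weight_cone" and y: "y \<in> weight_cone"
  shows "op (pool2 p q x) (pool2 p q y) = pool2 p q (x + y)"
proof -
  obtain s t a b where st: "x = (s, t)" and ab: "y = (a, b)" by (cases x; cases y)
  consider "b = 0" "a > 0" | "a = 0" "b > 0" | "a > 0" "b > 0"
    using y by (fastforce simp: ab mem_weight_cone)
  then show ?thesis
  proof cases
    case 1
    then show ?thesis using assms op_pool2_left by (simp add: st ab pool2_def)
  next
    case 2
    then show ?thesis using assms op_pool2_right by (simp add: st ab pool2_def)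
  next
    case 3
    have "op (pool2 p q x) (op (p, a) (q, b)) = op (op (pool2 p q x) (p, a)) (q, b)"
      using 3 assms by (simp add: op_assoc is_wf_pool2)
    also have "\<dots> = pool2 p q (x + y)"
      using 3 assms x by (simp add: st ab op_pool2_left op_pool2_right mem_weight_cone)
    finally show ?thesis using 3 by (simp add: ab pool2_def)
  qed
qed

lemma fst_pool2_scaleR_nat:
  assumes "p \<in> D" "q \<in> D" "x \<in> weight_cone" "n > 0"
  shows "fst (pool2 p q (real n *\<^sub>R x)) = fst (pool2 p q x)"
  using \<open>n > 0\<close>
proof (induction n rule: nat_induct_non_zero)
  case (Suc n)
  have nx: "real n *\<^sub>R x \<in> weight_cone" using Suc.hyps assms by (simp add: weight_cone_scaleR)
  have "pool2 p q (real (Suc n) *\<^sub>R x) = op (pool2 p q (real n *\<^sub>R x)) (pool2 p q x)"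
    using assms nx by (simp add: op_pool2_pool2 algebra_simps)
  then show ?case
    using Suc.IH assms nx by (simp add: fst_op_same is_wf_pool2)
qed simp

lemma fst_pool2_scaleR_Rats:
  assumes "p \<in> D" "q \<in> D" "x \<in> weight_cone" "r \<in> \<rat>" "r > 0"
  shows "fst (pool2 p q (r *\<^sub>R x)) = fst (pool2 p q x)"
proof -
  obtain m n :: nat where mn: "n > 0" "r = real m / real n"
    using Rats_abs_nat_div_natE[OF assms(4)] assms(5) by (metis abs_of_pos gr0I)
  with assms(5) have "m > 0" by (simp add: zero_less_divide_iff)
  define y where "y = (1 / real n) *\<^sub>R x"
  have y: "y \<in> weight_cone" using mn assms(3) by (simp add: y_def weight_cone_scaleR)
  have "fst (pool2 p q (r *\<^sub>R x)) = fst (pool2 p q (real m *\<^sub>R y))"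
    using mn by (simp add: y_def)
  also have "\<dots> = fst (pool2 p q (real n *\<^sub>R y))"
    using fst_pool2_scaleR_nat assms y mn \<open>m > 0\<close> by metis
  also have "\<dots> = fst (pool2 p q x)"
    using mn by (simp add: y_def)
  finally show ?thesis .
qed

lemma fst_pool2_scaleR:
  assumes pq: "p \<in> D" "q \<in> D" and x: "x \<in> weight_cone" and "r > 0"
  shows "fst (pool2 p q (r *\<^sub>R x)) = fst (pool2 p q x)"
proof -
  have cont: "continuous_on {0<..} (\<lambda>l. ext_pr op p q (l *\<^sub>R x))"
    by (rule continuous_on_compose2[OF continuous_on_ext_pr[OF pq]])
      (use weight_cone_scaleR[OF _ x] in \<open>auto simp: image_subset_iff intro!: continuous_intros\<close>)
  have "ext_pr op p q (r *\<^sub>R x) = fst (pool2 p q x)"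
    by (rule continuous_on_const_on_Rats[OF open_greaterThan cont])
      (use assms fst_pool2_scaleR_Rats in \<open>auto simp: fst_pool2\<close>)
  then show ?thesis by (simp add: fst_pool2)
qed

definition mix :: "real \<Rightarrow> real \<Rightarrow> real \<Rightarrow> real" where
  "mix p q t = fst (pool2 p q (t, 1 - t))"

lemma mix_0 [simp]: "mix p q 0 = q" and mix_1 [simp]: "mix p q 1 = p"
  by (simp_all add: mix_def pool2_def)

lemma fst_pool2_eq_mix:
  assumes "p \<in> D" "q \<in> D" "x \<in> weight_cone"
  shows "fst (pool2 p q x) = mix p q (fst x / (fst x + snd x))"
proof -
  obtain a b where x: "x = (a, b)" by (cases x)
  with assms have ab: "a \<ge> 0" "b \<ge> 0" "a + b > 0" by (simp_all add: mem_weight_cone)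
  define t where "t = a / (a + b)"
  have t: "(t, 1 - t) \<in> weight_cone" using ab by (simp add: mem_weight_cone t_def)
  have "x = (a + b) *\<^sub>R (t, 1 - t)" using ab by (simp add: x t_def field_simps)
  then have "fst (pool2 p q x) = fst (pool2 p q (t, 1 - t))"
    using fst_pool2_scaleR[OF assms(1,2) t] ab by simp
  then show ?thesis by (simp add: mix_def x t_def)
qed

lemma continuous_on_mix: "p \<in> D \<Longrightarrow> q \<in> D \<Longrightarrow> continuous_on {0..1} (mix p q)"
  unfolding mix_def fst_pool2
  by (rule continuous_on_compose2[OF continuous_on_ext_pr, where f = "\<lambda>t. (t, 1 - t)"])
    (auto simp: mem_weight_cone intro!: continuous_intros)

definition coord :: "real \<Rightarrow> real \<Rightarrow> real \<Rightarrow> real" where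
  "coord c d = inv_into {0..1} (mix d c)"

definition qa_generator_on :: "real set \<Rightarrow> (real \<Rightarrow> real) \<Rightarrow> bool" where
  "qa_generator_on S \<phi> \<longleftrightarrow> continuous_on S \<phi> \<and> strict_mono_on S \<phi> \<and>
     (\<forall>p\<in>S. \<forall>q\<in>S. \<forall>u>0. \<forall>v>0. \<phi> (fst (op (p, u) (q, v))) = (u * \<phi> p + v * \<phi> q) / (u + v))"

lemma qa_generator_on_subset: "qa_generator_on S \<phi> \<Longrightarrow> T \<subseteq> S \<Longrightarrow> qa_generator_on T \<phi>"
  unfolding qa_generator_on_def strict_mono_on_def by (meson continuous_on_subset subsetD)

lemma qa_generator_on_normalize:
  assumes \<phi>: "qa_generator_on S \<phi>" and ab: "\<phi> a < \<phi> b"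
  shows "qa_generator_on S (\<lambda>x. (\<phi> x - \<phi> a) / (\<phi> b - \<phi> a))"
  unfolding qa_generator_on_def
proof (intro conjI strict_mono_onI ballI allI impI)
  show "continuous_on S (\<lambda>x. (\<phi> x - \<phi> a) / (\<phi> b - \<phi> a))"
    using \<phi> ab unfolding qa_generator_on_def by (intro continuous_intros) auto
  show "(\<phi> r - \<phi> a) / (\<phi> b - \<phi> a) < (\<phi> s - \<phi> a) / (\<phi> b - \<phi> a)" if "r \<in> S" "s \<in> S" "r < s" for r s
  proof -
    have "\<phi> r < \<phi> s" using \<phi> that unfolding qa_generator_on_def by (auto dest: strict_mono_onD)
    then show ?thesis using ab by (simp add: divide_strict_right_mono)
  qed
  fix p q u v :: real assume "p \<in> S" "q \<in> S" "u > 0" "v > 0"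
  then have "\<phi> (fst (op (p, u) (q, v))) = (u * \<phi> p + v * \<phi> q) / (u + v)"
    using \<phi> unfolding qa_generator_on_def by blast
  moreover have "((u * \<phi> p + v * \<phi> q) / (u + v) - \<phi> a) / k =
      (u * ((\<phi> p - \<phi> a) / k) + v * ((\<phi> q - \<phi> a) / k)) / (u + v)" if "k \<noteq> 0" for k
    using that \<open>u > 0\<close> \<open>v > 0\<close> by (simp add: divide_simps) (simp add: algebra_simps)
  ultimately show "(\<phi> (fst (op (p, u) (q, v))) - \<phi> a) / (\<phi> b - \<phi> a) =
    (u * ((\<phi> p - \<phi> a) / (\<phi> b - \<phi> a)) + v * ((\<phi> q - \<phi> a) / (\<phi> b - \<phi> a))) / (u + v)"
    using ab by simp
qed

lemma qa_generator_op_weighted: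
  assumes g: "qa_generator_on D g" and F: "is_wf D F" and G: "is_wf D G"
  shows "(snd F + snd G) * g (fst (op F G)) = snd F * g (fst F) + snd G * g (fst G)"
proof -
  obtain p u q v where FG: "F = (p, u)" "G = (q, v)" by (cases F; cases G)
  with F G have "p \<in> D" "q \<in> D" "u > 0" "v > 0" by simp_all
  with g have "g (fst (op (p, u) (q, v))) = (u * g p + v * g q) / (u + v)"
    unfolding qa_generator_on_def by blast
  with F G show ?thesis by (simp add: FG)
qed

lemma foldl_op_qa_generator:
  assumes g: "qa_generator_on D g"
  shows "is_wf D F \<Longrightarrow> \<forall>G\<in>set xs. is_wf D G \<Longrightarrow>
    is_wf D (foldl op F xs) \<and> snd (foldl op F xs) = snd F + (\<Sum>G\<leftarrow>xs. snd G) \<and>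
    (snd F + (\<Sum>G\<leftarrow>xs. snd G)) * g (fst (foldl op F xs)) =
      snd F * g (fst F) + (\<Sum>G\<leftarrow>xs. snd G * g (fst G))"
proof (induction xs arbitrary: F)
  case (Cons G xs)
  then have G: "is_wf D G" by simp
  have "is_wf D (op F G)" "snd (op F G) = snd F + snd G"
    "(snd F + snd G) * g (fst (op F G)) = snd F * g (fst F) + snd G * g (fst G)"
    using Cons.prems(1) G by (rule is_wf_op, rule snd_op, rule qa_generator_op_weighted[OF g])
  with Cons.IH[of "op F G"] Cons.prems show ?case by (simp add: add.assoc)
qed simp

lemma pool_list_eq_qa_pool:
  assumes g: "qa_generator_on D g" and "xs \<noteq> []" and wf: "\<forall>F\<in>set xs. is_wf D F"
  shows "pool_list op xs = qa_pool D g xs"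
proof -
  obtain F ys where xs: "xs = F # ys" using \<open>xs \<noteq> []\<close> by (cases xs) auto
  define P where "P = foldl op F ys"
  have "is_wf D F" "\<forall>G\<in>set ys. is_wf D G" using wf by (simp_all add: xs)
  note P = foldl_op_qa_generator[OF g this, folded P_def]
  have sums: "(\<Sum>G\<leftarrow>xs. snd G) = snd P" "(\<Sum>G\<leftarrow>xs. snd G * g (fst G)) = snd P * g (fst P)"
    using P by (simp_all add: xs)
  have "fst P \<in> D" "snd P > 0" using P by (simp_all add: is_wf_def)
  moreover have "inj_on g D"
    using g strict_mono_on_imp_inj_on unfolding qa_generator_on_def by blast
  ultimately have "qa_pool D g xs = (fst P, snd P)" by (simp add: qa_pool_def sums)
  then show ?thesis by (simp add: P_def pool_list_def xs)
qed

end

locale pool_axioms_segment = pool_axioms +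
  fixes c d :: real
  assumes c_mem: "c \<in> D" and d_mem: "d \<in> D" and c_less_d: "c < d"
begin

lemma strict_mono_on_mix: "strict_mono_on {0..1} (mix d c)"
proof (rule strict_mono_on_Icc_if_Ioo[OF continuous_on_mix[OF d_mem c_mem]])
  have "mix d c t = fst (op (d, t) (c, 1 - t))" if "t \<in> {0<..<1}" for t
    using that by (simp add: mix_def pool2_def)
  then show "strict_mono_on {0<..<1} (mix d c)"
    using strict_mono_on_fst_op[of 1 d c] c_mem d_mem c_less_d by (simp add: strict_mono_on_def)
qed

lemma bij_betw_mix: "bij_betw (mix d c) {0..1} {c..d}"
  unfolding bij_betw_def
  using strict_mono_on_imp_inj_on[OF strict_mono_on_mix]
    strict_mono_image_Icc[OF _ continuous_on_mix[OF d_mem c_mem] strict_mono_on_mix] by simp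

lemma coord_mem: "p \<in> {c..d} \<Longrightarrow> coord c d p \<in> {0..1}"
  unfolding coord_def using bij_betw_inv_into[OF bij_betw_mix] bij_betwE by blast

lemma mix_coord: "p \<in> {c..d} \<Longrightarrow> mix d c (coord c d p) = p"
  unfolding coord_def by (rule bij_betw_inv_into_right[OF bij_betw_mix])

lemma coord_mix: "t \<in> {0..1} \<Longrightarrow> coord c d (mix d c t) = t"
  unfolding coord_def by (rule bij_betw_inv_into_left[OF bij_betw_mix])

lemma continuous_on_coord: "continuous_on {c..d} (coord c d)"
  using continuous_on_inv[OF continuous_on_mix[OF d_mem c_mem] compact_Icc, of "coord c d"]
    bij_betw_mix coord_mix by (simp add: bij_betw_def)

lemma strict_mono_on_coord: "strict_mono_on {c..d} (coord c d)"
proof (rule strict_mono_onI)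
  fix p q assume "p \<in> {c..d}" "q \<in> {c..d}" "p < q"
  then show "coord c d p < coord c d q"
    using strict_mono_on_less[OF strict_mono_on_mix] coord_mem mix_coord by metis
qed

lemma pool2_coord:
  assumes "p \<in> {c..d}" "u > 0"
  shows "pool2 d c (u *\<^sub>R (coord c d p, 1 - coord c d p)) = (p, u)"
proof -
  have w: "(coord c d p, 1 - coord c d p) \<in> weight_cone"
    using coord_mem[OF assms(1)] by (simp add: mem_weight_cone)
  have "fst (pool2 d c (u *\<^sub>R (coord c d p, 1 - coord c d p))) = p"
    using fst_pool2_scaleR[OF d_mem c_mem w assms(2)] mix_coord[OF assms(1)] by (simp add: mix_def)
  moreover have "snd (pool2 d c (u *\<^sub>R (coord c d p, 1 - coord c d p))) = u"
    using snd_pool2[OF d_mem c_mem weight_cone_scaleR[OF assms(2) w]] by (simp add: algebra_simps)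
  ultimately show ?thesis by (simp add: prod_eq_iff)
qed

lemma fst_op_eq_mix:
  assumes "p \<in> {c..d}" "q \<in> {c..d}" "u > 0" "v > 0"
  shows "fst (op (p, u) (q, v)) = mix d c ((u * coord c d p + v * coord c d q) / (u + v))"
proof -
  let ?x = "u *\<^sub>R (coord c d p, 1 - coord c d p)" and ?y = "v *\<^sub>R (coord c d q, 1 - coord c d q)"
  have x: "?x \<in> weight_cone" and y: "?y \<in> weight_cone"
    using assms coord_mem by (simp_all add: mem_weight_cone algebra_simps)
  have "op (p, u) (q, v) = pool2 d c (?x + ?y)"
    using op_pool2_pool2[OF d_mem c_mem x y] pool2_coord assms by simp
  then show ?thesis
    using fst_pool2_eq_mix[OF d_mem c_mem weight_cone_add[OF x y]] by (simp add: algebra_simps)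
qed

lemma mean_coord_mem:
  assumes "p \<in> {c..d}" "q \<in> {c..d}" "u > 0" "v > 0"
  shows "(u * coord c d p + v * coord c d q) / (u + v) \<in> {0..1}"
proof -
  have "{min (coord c d p) (coord c d q)..max (coord c d p) (coord c d q)} \<subseteq> {0..1}"
    using coord_mem assms by auto
  with weighted_mean_between[of u v] assms(3,4) show ?thesis
    by (meson less_imp_le add_pos_pos subsetD)
qed

lemma fst_op_mem_Icc:
  "p \<in> {c..d} \<Longrightarrow> q \<in> {c..d} \<Longrightarrow> u > 0 \<Longrightarrow> v > 0 \<Longrightarrow> fst (op (p, u) (q, v)) \<in> {c..d}"
  using fst_op_eq_mix mean_coord_mem bij_betwE[OF bij_betw_mix] by metis

lemma Icc_subset: "{c..d} \<subseteq> D"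
proof
  fix p assume p: "p \<in> {c..d}"
  have "(coord c d p, 1 - coord c d p) \<in> weight_cone"
    using coord_mem[OF p] by (simp add: mem_weight_cone)
  then have "mix d c (coord c d p) \<in> D"
    using is_wf_pool2[OF d_mem c_mem] by (simp add: mix_def is_wf_def)
  then show "p \<in> D" using mix_coord[OF p] by simp
qed

lemma qa_generator_on_coord: "qa_generator_on {c..d} (coord c d)"
  unfolding qa_generator_on_def
  using continuous_on_coord strict_mono_on_coord fst_op_eq_mix mean_coord_mem coord_mix by simp

lemma qa_generator_on_Icc_eq_affine_coord:
  assumes \<phi>: "qa_generator_on {c..d} \<phi>" and p: "p \<in> {c..d}"
  shows "\<phi> p = \<phi> c + coord c d p * (\<phi> d - \<phi> c)"
proof -
  define t where "t = coord c d p"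
  have t: "t \<in> {0..1}" "mix d c t = p" using coord_mem mix_coord p by (auto simp: t_def)
  consider "t = 0" | "t = 1" | "0 < t" "t < 1" using t by fastforce
  then show ?thesis
  proof cases
    case 3
    then have "p = fst (op (d, t) (c, 1 - t))" using t by (simp add: mix_def pool2_def)
    then have "\<phi> p = t * \<phi> d + (1 - t) * \<phi> c"
      using \<phi> 3 c_mem d_mem c_less_d unfolding qa_generator_on_def by auto
    then show ?thesis by (simp add: t_def algebra_simps)
  qed (use t in \<open>auto simp: t_def\<close>)
qed

end

lemma (in pool_axioms) is_interval_domain: "is_interval D"
  unfolding is_interval_1
proof (intro ballI allI impI)
  fix c d x assume "c \<in> D" "d \<in> D" "c \<le> x \<and> x \<le> d"
  then show "x \<in> D"
  proof (cases "c = d")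
    case False
    with \<open>c \<in> D\<close> \<open>d \<in> D\<close> \<open>c \<le> x \<and> x \<le> d\<close> interpret pool_axioms_segment D op c d
      by unfold_locales auto
    show ?thesis using Icc_subset \<open>c \<le> x \<and> x \<le> d\<close> by auto
  qed (use \<open>d \<in> D\<close> in \<open>metis order_antisym\<close>)
qed

locale pool_axioms_anchored = pool_axioms +
  fixes a b :: real
  assumes a_mem: "a \<in> D" and b_mem: "b \<in> D" and a_less_b: "a < b"
begin

definition normalized_coord :: "real \<Rightarrow> real \<Rightarrow> real \<Rightarrow> real" where
  "normalized_coord c d x = (coord c d x - coord c d a) / (coord c d b - coord c d a)"

context
  fixes c d :: real
  assumes lower: "c \<in> D" "c \<le> a" and upper: "d \<in> D" "b \<le> d"
begin

interpretation pool_axioms_segment D op c d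
  using lower upper a_less_b by unfold_locales auto

lemma coord_a_less_b: "coord c d a < coord c d b"
  by (rule strict_mono_onD[OF strict_mono_on_coord]) (use lower upper a_less_b in auto)

lemma qa_generator_on_normalized_coord: "qa_generator_on {c..d} (normalized_coord c d)"
  unfolding normalized_coord_def
  by (rule qa_generator_on_normalize[OF qa_generator_on_coord coord_a_less_b])

lemma normalized_coord_unique:
  assumes \<psi>: "qa_generator_on {c..d} \<psi>" and \<psi>_ab: "\<psi> a = 0" "\<psi> b = 1" and x: "x \<in> {c..d}"
  shows "\<psi> x = normalized_coord c d x"
proof -
  define K where "K = \<psi> d - \<psi> c"
  have affine: "\<psi> y = \<psi> c + coord c d y * K" if "y \<in> {c..d}" for y
    unfolding K_def by (rule qa_generator_on_Icc_eq_affine_coord[OF \<psi> that])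
  have "a \<in> {c..d}" "b \<in> {c..d}" using lower upper a_less_b by auto
  note affine_abx = affine[OF this(1)] affine[OF this(2)] affine[OF x]
  have "(coord c d b - coord c d a) * K = \<psi> b - \<psi> a"
    using affine_abx by (simp add: algebra_simps)
  then have "K = 1 / (coord c d b - coord c d a)"
    using \<psi>_ab coord_a_less_b by (simp add: field_simps)
  moreover have "\<psi> x = (coord c d x - coord c d a) * K"
    using affine_abx \<psi>_ab by (simp add: algebra_simps)
  ultimately show ?thesis by (simp add: normalized_coord_def)
qed

end

lemma anchored_Icc_cover:
  assumes "p \<in> D" "q \<in> D"
  obtains c d where "c \<in> D" "c \<le> a" "d \<in> D" "b \<le> d" "p \<in> {c..d}" "q \<in> {c..d}"
  by (rule that[of "min a (min p q)" "max b (max p q)"])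
    (use assms a_mem b_mem in \<open>auto simp: min_def max_def\<close>)

definition generator :: "real \<Rightarrow> real" where
  "generator x = normalized_coord (min a x) (max b x) x"

lemma generator_eq_normalized_coord:
  assumes lower: "c \<in> D" "c \<le> a" and upper: "d \<in> D" "b \<le> d" and x: "x \<in> {c..d}"
  shows "generator x = normalized_coord c d x"
proof -
  interpret pool_axioms_segment D op c d
    using lower upper a_less_b by unfold_locales auto
  have "x \<in> D" using Icc_subset x by blast
  then have lower': "min a x \<in> D" "min a x \<le> a" and upper': "max b x \<in> D" "b \<le> max b x"
    using a_mem b_mem by (simp_all add: min_def max_def)
  have "qa_generator_on {min a x..max b x} (normalized_coord c d)"
    by (rule qa_generator_on_subset[OF qa_generator_on_normalized_coord[OF lower upper]])
      (use x lower upper in auto)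
  moreover have "normalized_coord c d a = 0" "normalized_coord c d b = 1"
    using coord_a_less_b[OF lower upper] by (simp_all add: normalized_coord_def)
  ultimately show ?thesis
    unfolding generator_def using normalized_coord_unique[OF lower' upper'] by simp
qed

lemma qa_generator_on_generator_Icc:
  assumes lower: "c \<in> D" "c \<le> a" and upper: "d \<in> D" "b \<le> d"
  shows "qa_generator_on {c..d} generator"
proof -
  interpret pool_axioms_segment D op c d
    using lower upper a_less_b by unfold_locales auto
  have eq: "generator x = normalized_coord c d x" if "x \<in> {c..d}" for x
    using generator_eq_normalized_coord[OF lower upper that] .
  have nc: "qa_generator_on {c..d} (normalized_coord c d)"
    by (rule qa_generator_on_normalized_coord[OF lower upper])
  show ?thesis
    unfolding qa_generator_on_def
  proof (intro conjI strict_mono_onI ballI allI impI)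
    have "continuous_on {c..d} (normalized_coord c d)"
      using nc by (simp add: qa_generator_on_def)
    then show "continuous_on {c..d} generator"
      by (rule continuous_on_eq) (simp add: eq)
    show "generator r < generator s" if "r \<in> {c..d}" "s \<in> {c..d}" "r < s" for r s
      using nc that strict_mono_onD[of "{c..d}" "normalized_coord c d" r s]
      unfolding qa_generator_on_def by (simp add: eq)
    fix p q u v :: real assume pq: "p \<in> {c..d}" "q \<in> {c..d}" and uv: "u > 0" "v > 0"
    then show "generator (fst (op (p, u) (q, v))) = (u * generator p + v * generator q) / (u + v)"
      using nc fst_op_mem_Icc[OF pq uv] unfolding qa_generator_on_def by (simp add: eq)
  qed
qed

lemma continuous_on_generator: "continuous_on D generator"
proof (rule continuous_on_if_continuous_on_Icc)
  fix c d assume "c \<in> D" "d \<in> D"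
  then obtain c' d' where cover: "c' \<in> D" "c' \<le> a" "d' \<in> D" "b \<le> d'" "c \<in> {c'..d'}" "d \<in> {c'..d'}"
    by (rule anchored_Icc_cover)
  then have "continuous_on {c'..d'} generator"
    using qa_generator_on_generator_Icc unfolding qa_generator_on_def by blast
  then show "continuous_on (D \<inter> {c..d}) generator"
    by (rule continuous_on_subset) (use cover in auto)
qed

lemma qa_generator_on_generator: "qa_generator_on D generator"
  unfolding qa_generator_on_def
proof (intro conjI continuous_on_generator strict_mono_onI ballI allI impI)
  fix p q assume "p \<in> D" "q \<in> D"
  then obtain c d where cover: "c \<in> D" "c \<le> a" "d \<in> D" "b \<le> d" "p \<in> {c..d}" "q \<in> {c..d}"
    by (rule anchored_Icc_cover)
  then have gen: "qa_generator_on {c..d} generator"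
    by (intro qa_generator_on_generator_Icc)
  show "generator p < generator q" if "p < q"
    using gen cover that strict_mono_onD[of "{c..d}" generator p q]
    unfolding qa_generator_on_def by blast
  show "generator (fst (op (p, u) (q, v))) = (u * generator p + v * generator q) / (u + v)"
    if "u > 0" "v > 0" for u v
    using gen cover that unfolding qa_generator_on_def by blast
qed


lemma qa_pooling_generator: "qa_pooling D generator op"
  using is_interval_domain qa_generator_on_generator pooling pool_list_eq_qa_pool
  unfolding qa_generator_on_def by unfold_locales auto

end

theorem theorem6p6:
  fixes D :: "real set" and op :: "wforecast \<Rightarrow> wforecast \<Rightarrow> wforecast"
  assumes "is_interval D" and "D \<subseteq> {0..1}" and "\<exists>a\<in>D. \<exists>b\<in>D. a < b"
    and "pooling_operator D op"
  shows "six_axioms D op \<longleftrightarrow>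
    (\<exists>g :: real \<Rightarrow> real. continuous_on D g \<and> strict_mono_on D g \<and>
       (\<forall>xs. xs \<noteq> [] \<longrightarrow> (\<forall>F\<in>set xs. is_wf D F) \<longrightarrow> pool_list op xs = qa_pool D g xs))"
proof -
  obtain a b where ab: "a \<in> D" "b \<in> D" "a < b" using assms(3) by blast
  have "qa_pooling D (pool_axioms_anchored.generator op a b) op" if "six_axioms D op"
  proof -
    interpret pool_axioms_anchored D op a b
      using ab assms(4) that by unfold_locales
    show ?thesis by (rule qa_pooling_generator)
  qed
  with qa_pooling.six_axioms_hold show ?thesis
    using assms(1,4) unfolding qa_pooling_def by blast
qed

end
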